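(* Let $\mathcal{R}$ be a finite valuation ring of order $q^r$, where $q$ is a power of an odd prime. For every constant $c>0$ there is a constant $C>0$ depending only on $c$ such that: for every $\mathcal{A}\subset\mathcal{R}$ with $|\mathcal{A}|\ge 2q^{r-1}$ and $|\mathcal{A}+\mathcal{A}|\,|\mathcal{A}|^2\ge c\,q^{3r-1}$, \[\max\{|\mathcal{A}+\mathcal{A}|,\ |\mathcal{A}^2+\mathcal{A}^2|\}\ \ge\ C\,q^{r/3}|\mathcal{A}|^{2/3}.\]
   Context: A finite valuation ring is a finite, local, principal commutative ring with identity. Its unique maximal ideal is $(z)$ for a uniformizer $z$; the residue field $\mathcal{R}/(z)$ has $q$ elements; $r$ is the smallest positive integer with $z^r=0$; then $|\mathcal{R}|=q^r$ and $|(z)|=q^{r-1}$. For $\mathcal{A}\subset\mathcal{R}$: $\mathcal{A}+\mathcal{A}=\{a+b: a,b\in\mathcal{A}\}$, $\mathcal{A}^2=\{x^2: x\in\mathcal{A}\}$, and $\mathcal{A}^2+\mathcal{A}^2=\{u+v: u,v\in\mathcal{A}^2\}$. *)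

theory Defs
  imports "HOL-Algebra.Algebra" "HOL-Computational_Algebra.Primes"
begin

definition finite_valuation_ring :: "('a, 'b) ring_scheme \<Rightarrow> bool" where
  "finite_valuation_ring R \<longleftrightarrow>
     cring R \<and> finite (carrier R) \<and>
     (\<exists>!M. maximalideal M R) \<and>
     (\<forall>I. ideal I R \<longrightarrow> principalideal I R)"

definition ring_sumset :: "('a, 'b) ring_scheme \<Rightarrow> 'a set \<Rightarrow> 'a set" where
  "ring_sumset R A = {a \<oplus>\<^bsub>R\<^esub> b | a b. a \<in> A \<and> b \<in> A}"

definition ring_squares :: "('a, 'b) ring_scheme \<Rightarrow> 'a set \<Rightarrow> 'a set" where
  "ring_squares R A = (\<lambda>x. x \<otimes>\<^bsub>R\<^esub> x) ` A"

end

theory Submission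
  imports Defs "HOL-Analysis.Convex"
begin

text \<open>
  Count incidences between P = (A + A) \<times> (A^2 + A^2) and the parabolas y = x^2 + m x + b over R.
  Two points whose abscissae differ by a unit lie on at most one common parabola, and on a given
  parabola a point has at most |M| companions whose abscissa is congruent to its own modulo the
  maximal ideal M. A second moment computation therefore shows that a family L of parabolas, each
  containing at least \<alpha> points of P, satisfies |R| \<alpha> \<le> 2 |P| or |L| \<alpha>^2 \<le> 4 |P| |R| |M|.
  The parabolas y = (x - a)^2 + c^2 with a \<in> A and c \<in> A a unit each contain the |A| points
  (a + b, b^2 + c^2), b \<in> A, and since 2 is a unit and |A| \<ge> 2 |M| there are at least |A|^2 / 4
  of them. With |R| = q^r, |M| = q^(r-1) and the hypothesis on |A + A| |A|^2, either alternative
  gives max (|A + A|, |A^2 + A^2|)^3 \<ge> |A + A|^2 |A^2 + A^2| \<ge> min (1/2, c/16) q^r |A|^2.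
\<close>

section \<open>Counting\<close>

lemma card_eq_sum_card_fibres:
  assumes "finite S"
  shows "card S = (\<Sum>y\<in>f ` S. card {x \<in> S. f x = y})"
  using sum.image_gen[OF assms, of "\<lambda>_. 1::nat" f] by (simp only: card_eq_sum[symmetric])

lemma card_eq_card_image_mult:
  assumes "finite S" and "\<And>y. y \<in> f ` S \<Longrightarrow> card {x \<in> S. f x = y} = k"
  shows "card S = card (f ` S) * k"
  using card_eq_sum_card_fibres[OF assms(1), of f] assms(2) by simp

lemma card_le_card_image_mult:
  assumes "finite S" and "\<And>y. y \<in> f ` S \<Longrightarrow> card {x \<in> S. f x = y} \<le> k"
  shows "card S \<le> card (f ` S) * k"
proof -
  have "card S \<le> (\<Sum>y\<in>f ` S. k)"
    unfolding card_eq_sum_card_fibres[OF assms(1), of f] by (rule sum_mono) (rule assms(2))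
  thus ?thesis by simp
qed

lemma sum_card_incidences_swap:
  assumes "finite A" and "finite B"
  shows "(\<Sum>a\<in>A. card {b \<in> B. r a b}) = (\<Sum>b\<in>B. card {a \<in> A. r a b})"
  using sum.swap_restrict[OF assms, of "\<lambda>_ _. 1::nat" r] by (simp only: card_eq_sum[symmetric])

section \<open>Commutative rings\<close>

lemma (in ring) Units_mult_eq_zero_iff:
  assumes "u \<in> Units R" and "x \<in> carrier R"
  shows "u \<otimes> x = \<zero> \<longleftrightarrow> x = \<zero>"
  using assms by (metis Units_closed Units_l_cancel r_null zero_closed)

lemma (in ring) even_card_carrier_if_one_add_one_eq_zero:
  assumes "finite (carrier R)" and "\<one> \<noteq> \<zero>" and "\<one> \<oplus> \<one> = \<zero>"
  shows "even (card (carrier R))"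
proof -
  have "[(2::nat)] \<cdot> \<one> = \<zero>" using assms(3) by (simp add: numeral_2_eq_2)
  hence "add.ord \<one> dvd 2" using add.pow_eq_id by simp
  moreover have "add.ord \<one> \<noteq> 1" using add.ord_eq_1 assms(2) by simp
  ultimately have "add.ord \<one> = 2"
    by (metis dvd_antisym dvd_refl one_dvd prime_nat_iff two_is_prime_nat)
  thus ?thesis using add.ord_dvd_group_order[of \<one>] by (simp add: order_def)
qed

lemma (in ring) ideal_subset_maximalideal:
  assumes "finite (carrier R)" and "ideal I R" and "I \<noteq> carrier R"
  obtains M where "maximalideal M R" and "I \<subseteq> M"
proof -
  let ?S = "{J. ideal J R \<and> I \<subseteq> J \<and> J \<noteq> carrier R}"
  have "?S \<subseteq> Pow (carrier R)"
    using ideal.Icarr by fast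
  hence "finite ?S" using assms(1) by (simp add: finite_subset)
  moreover have "?S \<noteq> {}" using assms by blast
  ultimately obtain M where M: "M \<in> ?S" and M_max: "\<forall>J\<in>?S. M \<le> J \<longrightarrow> M = J"
    by (meson finite_has_maximal)
  have "maximalideal M R"
  proof (rule maximalidealI)
    show "ideal M R" "carrier R \<noteq> M" using M by auto
    fix J assume "ideal J R" "M \<subseteq> J" "J \<subseteq> carrier R"
    show "J = M \<or> J = carrier R"
    proof (cases "J = carrier R")
      case False
      with M \<open>ideal J R\<close> \<open>M \<subseteq> J\<close> have "J \<in> ?S" by auto
      with M_max \<open>M \<subseteq> J\<close> show ?thesis by auto
    qed simp
  qed
  with M that show ?thesis by simp
qed

definition (in cring) annihilator :: "'a \<Rightarrow> 'a set" where
  "annihilator w = {x \<in> carrier R. x \<otimes> w = \<zero>}"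

lemma (in cring) card_eq_card_image_mult_card_annihilator:
  assumes "finite (carrier R)" and w: "w \<in> carrier R" and S: "S \<subseteq> carrier R"
    and S_closed: "\<And>a x. a \<in> S \<Longrightarrow> x \<in> annihilator w \<Longrightarrow> a \<oplus> x \<in> S"
  shows "card S = card ((\<lambda>a. a \<otimes> w) ` S) * card (annihilator w)"
proof (rule card_eq_card_image_mult)
  show "finite S" using S assms(1) finite_subset by blast
  fix y assume "y \<in> (\<lambda>a. a \<otimes> w) ` S"
  then obtain a where a: "a \<in> S" "y = a \<otimes> w" by blast
  have ac: "a \<in> carrier R" using a S by blast
  have "{x \<in> S. x \<otimes> w = y} = (\<lambda>x. a \<oplus> x) ` annihilator w"
  proof (intro equalityI subsetI)
    fix s assume "s \<in> {x \<in> S. x \<otimes> w = y}"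
    hence s: "s \<in> S" "s \<otimes> w = a \<otimes> w" using a by auto
    have sc: "s \<in> carrier R" using s S by blast
    have "(s \<ominus> a) \<otimes> w = s \<otimes> w \<ominus> a \<otimes> w" using sc ac w by algebra
    also have "\<dots> = \<zero>" using s(2) ac w by algebra
    finally have "s \<ominus> a \<in> annihilator w" using sc ac by (simp add: annihilator_def)
    moreover have "s = a \<oplus> (s \<ominus> a)" using sc ac by algebra
    ultimately show "s \<in> (\<lambda>x. a \<oplus> x) ` annihilator w" by blast
  next
    fix s assume "s \<in> (\<lambda>x. a \<oplus> x) ` annihilator w"
    then obtain x where x: "x \<in> annihilator w" "s = a \<oplus> x" by blast
    hence xc: "x \<in> carrier R" "x \<otimes> w = \<zero>" by (simp_all add: annihilator_def)
    have "(a \<oplus> x) \<otimes> w = a \<otimes> w \<oplus> x \<otimes> w" using ac xc w by algebra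
    thus "s \<in> {x \<in> S. x \<otimes> w = y}" using S_closed[OF a(1) x(1)] x(2) xc a ac w by simp
  qed
  moreover have "inj_on (\<lambda>x. a \<oplus> x) (annihilator w)"
    using ac by (intro inj_onI) (simp add: annihilator_def)
  ultimately show "card {x \<in> S. x \<otimes> w = y} = card (annihilator w)" by (simp add: card_image)
qed

lemma (in ring) card_le_card_ring_sumset:
  assumes "finite (carrier R)" and "A \<subseteq> carrier R"
  shows "card A \<le> card (ring_sumset R A)"
proof (cases "A = {}")
  case False
  then obtain a where a: "a \<in> A" by blast
  show ?thesis
  proof (rule card_inj_on_le)
    show "inj_on (\<lambda>b. a \<oplus> b) A"
      using a assms(2) by (intro inj_onI) (simp add: subset_iff)
    show "(\<lambda>b. a \<oplus> b) ` A \<subseteq> ring_sumset R A"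
      using a by (auto simp: ring_sumset_def)
    show "finite (ring_sumset R A)"
      by (rule finite_subset[OF _ assms(1)]) (use assms(2) in \<open>auto simp: ring_sumset_def\<close>)
  qed
qed simp

section \<open>Parabolas\<close>

definition (in cring) parabola :: "'a \<times> 'a \<Rightarrow> ('a \<times> 'a) set" where
  "parabola l = {(x, y). x \<in> carrier R \<and> y = x \<otimes> x \<oplus> fst l \<otimes> x \<oplus> snd l}"

lemma (in cring) mem_parabola_iff:
  "(x, y) \<in> parabola (m, b) \<longleftrightarrow> x \<in> carrier R \<and> y = x \<otimes> x \<oplus> m \<otimes> x \<oplus> b"
  by (simp add: parabola_def)

lemma (in cring) finite_parabola:
  assumes "finite (carrier R)"
  shows "finite (parabola l)"
proof -
  have "parabola l = (\<lambda>x. (x, x \<otimes> x \<oplus> fst l \<otimes> x \<oplus> snd l)) ` carrier R"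
    by (auto simp: parabola_def)
  thus ?thesis using assms by simp
qed

lemma (in cring) mem_parabola_iff_intercept:
  assumes "x \<in> carrier R" "y \<in> carrier R" "m \<in> carrier R" "b \<in> carrier R"
  shows "(x, y) \<in> parabola (m, b) \<longleftrightarrow> b = y \<ominus> (x \<otimes> x \<oplus> m \<otimes> x)"
proof
  assume "(x, y) \<in> parabola (m, b)"
  hence "y = x \<otimes> x \<oplus> m \<otimes> x \<oplus> b" by (simp add: mem_parabola_iff)
  thus "b = y \<ominus> (x \<otimes> x \<oplus> m \<otimes> x)" using assms by algebra
next
  assume "b = y \<ominus> (x \<otimes> x \<oplus> m \<otimes> x)"
  hence "y = x \<otimes> x \<oplus> m \<otimes> x \<oplus> b" using assms by algebra
  thus "(x, y) \<in> parabola (m, b)" using assms by (simp add: mem_parabola_iff)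
qed

lemma (in cring) card_parabolas_through_point:
  assumes "x \<in> carrier R" and "y \<in> carrier R"
  shows "card {l \<in> carrier R \<times> carrier R. (x, y) \<in> parabola l} = card (carrier R)"
proof -
  let ?b = "\<lambda>m. y \<ominus> (x \<otimes> x \<oplus> m \<otimes> x)"
  have "{l \<in> carrier R \<times> carrier R. (x, y) \<in> parabola l} = (\<lambda>m. (m, ?b m)) ` carrier R"
    using assms by (auto simp: mem_parabola_iff_intercept)
  moreover have "inj_on (\<lambda>m. (m, ?b m)) (carrier R)" by (rule inj_onI) simp
  ultimately show ?thesis by (simp add: card_image)
qed

lemma (in cring) card_parabolas_through_two_points_le_one:
  assumes p: "x \<in> carrier R" "y \<in> carrier R" and p': "x' \<in> carrier R" "y' \<in> carrier R"
    and unit: "x \<ominus> x' \<in> Units R"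
  shows "card {l \<in> carrier R \<times> carrier R. (x, y) \<in> parabola l \<and> (x', y') \<in> parabola l} \<le> 1"
proof -
  have slope: "(y \<ominus> y') \<ominus> (x \<otimes> x \<ominus> x' \<otimes> x') = (x \<ominus> x') \<otimes> m"
    if "m \<in> carrier R" "b \<in> carrier R" "(x, y) \<in> parabola (m, b)" "(x', y') \<in> parabola (m, b)"
    for m b
    using that p p' by (simp add: mem_parabola_iff) algebra
  let ?S = "{l \<in> carrier R \<times> carrier R. (x, y) \<in> parabola l \<and> (x', y') \<in> parabola l}"
  have unique: "l = l'" if "l \<in> ?S" and "l' \<in> ?S" for l l'
  proof -
    obtain m b m' b' where l: "l = (m, b)" and l': "l' = (m', b')" by fastforce
    have c: "m \<in> carrier R" "b \<in> carrier R" "m' \<in> carrier R" "b' \<in> carrier R"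
      and on: "(x, y) \<in> parabola (m, b)" "(x', y') \<in> parabola (m, b)"
        "(x, y) \<in> parabola (m', b')" "(x', y') \<in> parabola (m', b')"
      using that unfolding l l' by auto
    have "(x \<ominus> x') \<otimes> m = (x \<ominus> x') \<otimes> m'"
      using slope[OF c(1,2) on(1,2)] slope[OF c(3,4) on(3,4)] by simp
    hence "m = m'" using unit c by simp
    moreover have "b = y \<ominus> (x \<otimes> x \<oplus> m \<otimes> x)" and "b' = y \<ominus> (x \<otimes> x \<oplus> m' \<otimes> x)"
      using on(1,3) c p by (simp_all add: mem_parabola_iff_intercept)
    ultimately show "l = l'" using l l' by simp
  qed
  show ?thesis
  proof (cases "?S = {}")
    case False
    then obtain l0 where "l0 \<in> ?S" by blast
    hence "?S \<subseteq> {l0}" using unique by blast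
    thus ?thesis using card_mono[of "{l0}" ?S] by simp
  next
    case True
    show ?thesis by (simp only: True card.empty)
  qed
qed

lemma (in cring) sum_card_parabola_inter:
  assumes fin: "finite (carrier R)" and P: "P \<subseteq> carrier R \<times> carrier R"
  shows "(\<Sum>l\<in>carrier R \<times> carrier R. card (P \<inter> parabola l)) = card P * card (carrier R)"
proof -
  have finP: "finite P" using P fin finite_subset by blast
  have "(\<Sum>l\<in>carrier R \<times> carrier R. card (P \<inter> parabola l))
      = (\<Sum>l\<in>carrier R \<times> carrier R. card {p \<in> P. p \<in> parabola l})"
    by (simp add: Int_def)
  also have "\<dots> = (\<Sum>p\<in>P. card {l \<in> carrier R \<times> carrier R. p \<in> parabola l})"
    using fin finP by (intro sum_card_incidences_swap) auto
  also have "\<dots> = (\<Sum>p\<in>P. card (carrier R))"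
    using P card_parabolas_through_point by (intro sum.cong) auto
  finally show ?thesis by simp
qed

definition (in cring) vertex_parabola :: "'a \<Rightarrow> 'a \<Rightarrow> 'a \<times> 'a" where
  "vertex_parabola a s = (\<ominus> ((\<one> \<oplus> \<one>) \<otimes> a), a \<otimes> a \<oplus> s)"

lemma (in cring) mem_parabola_vertex_parabola_iff:
  assumes "a \<in> carrier R" and "s \<in> carrier R"
  shows "(x, y) \<in> parabola (vertex_parabola a s) \<longleftrightarrow>
    x \<in> carrier R \<and> y = (x \<ominus> a) \<otimes> (x \<ominus> a) \<oplus> s"
proof -
  have "x \<otimes> x \<oplus> \<ominus> ((\<one> \<oplus> \<one>) \<otimes> a) \<otimes> x \<oplus> (a \<otimes> a \<oplus> s) = (x \<ominus> a) \<otimes> (x \<ominus> a) \<oplus> s"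
    if "x \<in> carrier R" using that assms by algebra
  thus ?thesis by (auto simp: vertex_parabola_def mem_parabola_iff)
qed

lemma (in cring) inj_on_vertex_parabola:
  assumes two: "\<one> \<oplus> \<one> \<in> Units R"
  shows "inj_on (\<lambda>(a, s). vertex_parabola a s) (carrier R \<times> carrier R)"
proof (rule inj_onI, clarify)
  fix a s a' s'
  assume c: "a \<in> carrier R" "s \<in> carrier R" "a' \<in> carrier R" "s' \<in> carrier R"
    and eq: "vertex_parabola a s = vertex_parabola a' s'"
  have "\<ominus> ((\<one> \<oplus> \<one>) \<otimes> a) = \<ominus> ((\<one> \<oplus> \<one>) \<otimes> a')"
    using eq by (simp add: vertex_parabola_def)
  hence "(\<one> \<oplus> \<one>) \<otimes> a = (\<one> \<oplus> \<one>) \<otimes> a'"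
    using c by (metis minus_minus one_closed add.m_closed m_closed)
  hence a: "a = a'" using two c by simp
  have "s = (a \<otimes> a \<oplus> s) \<ominus> a \<otimes> a" and "s' = (a' \<otimes> a' \<oplus> s') \<ominus> a' \<otimes> a'"
    using c by algebra+
  hence "s = s'" using eq a by (simp add: vertex_parabola_def)
  with a show "a = a' \<and> s = s'" ..
qed

section \<open>Finite local rings\<close>

locale finite_local_ring = cring +
  assumes finite_carrier: "finite (carrier R)"
    and unique_maximalideal: "\<exists>!M. maximalideal M R"
begin

definition max_ideal :: "'a set" where
  "max_ideal = (THE M. maximalideal M R)"

definition residue_card :: nat where
  "residue_card = card (carrier (R Quot max_ideal))"

lemma maximalideal_max_ideal: "maximalideal max_ideal R"
  unfolding max_ideal_def by (rule theI'[OF unique_maximalideal])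

lemma maximalideal_eq_max_ideal: "maximalideal M R \<Longrightarrow> M = max_ideal"
  unfolding max_ideal_def by (rule the1_equality[OF unique_maximalideal, symmetric])

sublocale max_ideal: maximalideal max_ideal R
  by (rule maximalideal_max_ideal)

lemma finite_max_ideal: "finite max_ideal"
  using finite_subset[OF max_ideal.a_subset finite_carrier] .

lemma card_max_ideal_pos: "0 < card max_ideal"
  using finite_max_ideal max_ideal.zero_closed card_gt_0_iff by blast

lemma residue_card_mult_card_max_ideal: "residue_card * card max_ideal = card (carrier R)"
  using a_lagrange[OF finite_carrier max_ideal.additive_subgroup_axioms]
  by (simp add: residue_card_def FactRing_def order_def)

lemma Units_iff_notin_max_ideal:
  assumes "a \<in> carrier R"
  shows "a \<in> Units R \<longleftrightarrow> a \<notin> max_ideal"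
proof
  assume a: "a \<in> Units R"
  show "a \<notin> max_ideal"
  proof
    assume "a \<in> max_ideal"
    hence "\<one> \<in> max_ideal" using max_ideal.I_l_closed[of a "inv a"] a by simp
    hence "max_ideal = carrier R" by (rule max_ideal.one_imp_carrier)
    thus False using max_ideal.I_notcarr by simp
  qed
next
  assume a_notin: "a \<notin> max_ideal"
  show "a \<in> Units R"
  proof (rule ccontr)
    assume "a \<notin> Units R"
    hence "PIdl a \<noteq> carrier R" using ideal_eq_carrier_iff[OF assms] by simp
    then obtain M where "maximalideal M R" and "PIdl a \<subseteq> M"
      by (rule ideal_subset_maximalideal[OF finite_carrier cgenideal_ideal[OF assms]])
    hence "a \<in> max_ideal" using maximalideal_eq_max_ideal cgenideal_self[OF assms] by auto
    thus False using a_notin by simp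
  qed
qed

lemma Units_add_max_ideal:
  assumes u: "u \<in> Units R" and t: "t \<in> max_ideal"
  shows "u \<oplus> t \<in> Units R"
proof -
  have uc: "u \<in> carrier R" and tc: "t \<in> carrier R"
    using Units_closed[OF u] max_ideal.Icarr[OF t] .
  have "u \<oplus> t \<notin> max_ideal"
  proof
    assume "u \<oplus> t \<in> max_ideal"
    hence "(u \<oplus> t) \<oplus> \<ominus> t \<in> max_ideal" using t by simp
    moreover have "(u \<oplus> t) \<oplus> \<ominus> t = u" using uc tc by algebra
    ultimately show False using u Units_iff_notin_max_ideal[OF uc] by simp
  qed
  thus ?thesis using Units_iff_notin_max_ideal uc tc by simp
qed

lemma Units_or_Units_if_add_Units:
  assumes "x \<in> carrier R" and "y \<in> carrier R" and "x \<oplus> y \<in> Units R"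
  shows "x \<in> Units R \<or> y \<in> Units R"
proof (rule ccontr)
  assume "\<not> (x \<in> Units R \<or> y \<in> Units R)"
  hence "x \<in> max_ideal" "y \<in> max_ideal"
    using Units_iff_notin_max_ideal[OF assms(1)] Units_iff_notin_max_ideal[OF assms(2)] by auto
  hence "x \<oplus> y \<in> max_ideal" by (rule max_ideal.a_closed)
  thus False using assms(3) Units_iff_notin_max_ideal[OF add.m_closed[OF assms(1,2)]] by simp
qed

lemma one_add_one_Units_if_odd_residue_card:
  assumes "odd residue_card"
  shows "\<one> \<oplus> \<one> \<in> Units R"
proof (rule ccontr)
  let ?Q = "R Quot max_ideal"
  assume "\<one> \<oplus> \<one> \<notin> Units R"
  hence two: "\<one> \<oplus> \<one> \<in> max_ideal" using Units_iff_notin_max_ideal by simp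
  interpret Q: field ?Q using max_ideal.quotient_is_field is_cring .
  interpret hom: ring_hom_ring R ?Q "(+>) max_ideal" by (rule max_ideal.rcos_ring_hom_ring)
  have "carrier ?Q = (+>) max_ideal ` carrier R"
    unfolding FactRing_def A_RCOSETS_def' by auto
  hence fin: "finite (carrier ?Q)" using finite_carrier by (simp only: finite_imageI)
  have "\<one>\<^bsub>?Q\<^esub> \<oplus>\<^bsub>?Q\<^esub> \<one>\<^bsub>?Q\<^esub> = max_ideal +> (\<one> \<oplus> \<one>)"
    by (simp only: hom.hom_add[OF one_closed one_closed] hom.hom_one)
  also have "\<dots> = max_ideal +> \<zero>"
    by (simp only: max_ideal.a_rcos_const[OF two] max_ideal.a_rcos_const[OF max_ideal.zero_closed])
  also have "\<dots> = \<zero>\<^bsub>?Q\<^esub>" by (rule hom.hom_zero)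
  finally have "even residue_card"
    unfolding residue_card_def by (rule Q.even_card_carrier_if_one_add_one_eq_zero[OF fin Q.one_not_zero])
  thus False using assms by simp
qed

lemma square_eq_square_imp_eq_or_eq_minus:
  assumes two: "\<one> \<oplus> \<one> \<in> Units R" and c: "c \<in> Units R" and d: "d \<in> carrier R"
    and sq: "c \<otimes> c = d \<otimes> d"
  shows "d = c \<or> d = \<ominus> c"
proof -
  have cc: "c \<in> carrier R" using c by (rule Units_closed)
  have zero: "(c \<ominus> d) \<otimes> (c \<oplus> d) = \<zero>" and zero': "(c \<oplus> d) \<otimes> (c \<ominus> d) = \<zero>"
    using cc d sq by algebra+
  have "(c \<ominus> d) \<oplus> (c \<oplus> d) = (\<one> \<oplus> \<one>) \<otimes> c" using cc d by algebra
  also have "\<dots> \<in> Units R" using two c by (rule Units_m_closed)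
  finally consider "c \<ominus> d \<in> Units R" | "c \<oplus> d \<in> Units R"
    using Units_or_Units_if_add_Units[OF minus_closed[OF cc d] add.m_closed[OF cc d]] by blast
  thus ?thesis
  proof cases
    case 1
    hence "c \<oplus> d = \<zero>" using zero cc d by (simp add: Units_mult_eq_zero_iff)
    moreover have "d = (c \<oplus> d) \<oplus> \<ominus> c" using cc d by algebra
    ultimately show ?thesis using cc by simp
  next
    case 2
    hence "c \<ominus> d = \<zero>" using zero' cc d by (simp add: Units_mult_eq_zero_iff)
    moreover have "d = c \<ominus> (c \<ominus> d)" using cc d by algebra
    ultimately show ?thesis using cc by simp
  qed
qed

lemma card_le_twice_card_squares:
  assumes two: "\<one> \<oplus> \<one> \<in> Units R" and S: "S \<subseteq> Units R"
  shows "card S \<le> 2 * card ((\<lambda>c. c \<otimes> c) ` S)"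
proof -
  have "card S \<le> card ((\<lambda>c. c \<otimes> c) ` S) * 2"
  proof (rule card_le_card_image_mult)
    show "finite S" by (rule finite_subset[OF _ finite_carrier]) (use S in auto)
    fix y assume "y \<in> (\<lambda>c. c \<otimes> c) ` S"
    then obtain c where c: "c \<in> S" "y = c \<otimes> c" by blast
    have "{d \<in> S. d \<otimes> d = y} \<subseteq> {c, \<ominus> c}"
    proof
      fix d assume "d \<in> {d \<in> S. d \<otimes> d = y}"
      hence "d \<in> Units R" and "c \<otimes> c = d \<otimes> d" using c S by auto
      thus "d \<in> {c, \<ominus> c}"
        using square_eq_square_imp_eq_or_eq_minus[OF two, of c d] c S Units_closed by auto
    qed
    hence "card {d \<in> S. d \<otimes> d = y} \<le> card {c, \<ominus> c}" by (rule card_mono[rotated]) simp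
    also have "\<dots> \<le> 2" by (simp add: card_insert_if)
    finally show "card {d \<in> S. d \<otimes> d = y} \<le> 2" .
  qed
  thus ?thesis by simp
qed

lemma card_near_points_on_parabola_le:
  assumes "x \<in> carrier R"
  shows "card ({p \<in> P. x \<ominus> fst p \<in> max_ideal} \<inter> parabola l) \<le> card max_ideal"
proof (rule card_inj_on_le)
  show "inj_on (\<lambda>p. x \<ominus> fst p) ({p \<in> P. x \<ominus> fst p \<in> max_ideal} \<inter> parabola l)"
  proof (rule inj_onI)
    fix p p' assume "p \<in> {p \<in> P. x \<ominus> fst p \<in> max_ideal} \<inter> parabola l"
      and "p' \<in> {p \<in> P. x \<ominus> fst p \<in> max_ideal} \<inter> parabola l"
      and eq: "x \<ominus> fst p = x \<ominus> fst p'"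
    hence on: "p \<in> parabola l" "p' \<in> parabola l" by auto
    hence c: "fst p \<in> carrier R" "fst p' \<in> carrier R" by (auto simp: parabola_def)
    have "fst p = x \<ominus> (x \<ominus> fst p)" and "fst p' = x \<ominus> (x \<ominus> fst p')"
      using c assms by algebra+
    hence "fst p = fst p'" using eq by simp
    thus "p = p'" using on by (auto simp: parabola_def prod_eq_iff)
  qed
  show "(\<lambda>p. x \<ominus> fst p) ` ({p \<in> P. x \<ominus> fst p \<in> max_ideal} \<inter> parabola l) \<subseteq> max_ideal"
    by auto
  show "finite max_ideal" by (rule finite_max_ideal)
qed

lemma sum_card_parabola_inter_through_point_le:
  assumes P: "P \<subseteq> carrier R \<times> carrier R" and x: "x \<in> carrier R" and y: "y \<in> carrier R"
  shows "(\<Sum>l\<in>{l \<in> carrier R \<times> carrier R. (x, y) \<in> parabola l}. card (P \<inter> parabola l))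
    \<le> card P + card (carrier R) * card max_ideal"
proof -
  let ?L = "{l \<in> carrier R \<times> carrier R. (x, y) \<in> parabola l}"
  let ?U = "{p \<in> P. x \<ominus> fst p \<in> Units R}"
  let ?N = "{p \<in> P. x \<ominus> fst p \<in> max_ideal}"
  have finP: "finite P" using P finite_carrier finite_subset by blast
  have finL: "finite ?L" using finite_carrier by simp
  have split: "card (P \<inter> parabola l) = card (?U \<inter> parabola l) + card (?N \<inter> parabola l)" for l
  proof -
    have "P = ?U \<union> ?N" using P x Units_iff_notin_max_ideal by auto
    hence "P \<inter> parabola l = (?U \<inter> parabola l) \<union> (?N \<inter> parabola l)" by blast
    moreover have "(?U \<inter> parabola l) \<inter> (?N \<inter> parabola l) = {}"
      using P x Units_iff_notin_max_ideal by auto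
    ultimately show ?thesis using finP by (simp add: card_Un_disjoint)
  qed
  have "(\<Sum>l\<in>?L. card (?U \<inter> parabola l)) = (\<Sum>l\<in>?L. card {p \<in> ?U. p \<in> parabola l})"
    by (simp add: Int_def)
  also have "\<dots> = (\<Sum>p\<in>?U. card {l \<in> ?L. p \<in> parabola l})"
    using finP finL by (intro sum_card_incidences_swap) auto
  also have "\<dots> \<le> (\<Sum>p\<in>?U. 1)"
  proof (rule sum_mono)
    fix p assume "p \<in> ?U"
    moreover obtain x' y' where "p = (x', y')" by fastforce
    ultimately have "x' \<in> carrier R" "y' \<in> carrier R" "x \<ominus> x' \<in> Units R" using P by auto
    from card_parabolas_through_two_points_le_one[OF x y this]
    show "card {l \<in> ?L. p \<in> parabola l} \<le> 1" by (simp add: \<open>p = (x', y')\<close> conj_assoc)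
  qed
  also have "\<dots> \<le> card P" using finP by (simp add: card_mono)
  finally have U_bound: "(\<Sum>l\<in>?L. card (?U \<inter> parabola l)) \<le> card P" .
  have "(\<Sum>l\<in>?L. card (?N \<inter> parabola l)) \<le> (\<Sum>l\<in>?L. card max_ideal)"
    using card_near_points_on_parabola_le[OF x] by (rule sum_mono)
  also have "\<dots> = card (carrier R) * card max_ideal"
    using card_parabolas_through_point[OF x y] by simp
  finally have N_bound: "(\<Sum>l\<in>?L. card (?N \<inter> parabola l)) \<le> card (carrier R) * card max_ideal" .
  show ?thesis
    unfolding split sum.distrib using U_bound N_bound by (rule add_mono)
qed

lemma sum_square_card_parabola_inter_le:
  assumes P: "P \<subseteq> carrier R \<times> carrier R"
  shows "(\<Sum>l\<in>carrier R \<times> carrier R. card (P \<inter> parabola l) ^ 2)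
    \<le> card P ^ 2 + card P * (card (carrier R) * card max_ideal)"
proof -
  let ?n = "\<lambda>l. card (P \<inter> parabola l)"
  have finP: "finite P" using P finite_carrier finite_subset by blast
  have "(\<Sum>l\<in>carrier R \<times> carrier R. ?n l ^ 2)
      = (\<Sum>l\<in>carrier R \<times> carrier R. \<Sum>p\<in>{p \<in> P. p \<in> parabola l}. ?n l)"
    by (simp add: power2_eq_square Int_def)
  also have "\<dots> = (\<Sum>p\<in>P. \<Sum>l\<in>{l \<in> carrier R \<times> carrier R. p \<in> parabola l}. ?n l)"
    using finite_carrier finP by (intro sum.swap_restrict) auto
  also have "\<dots> \<le> (\<Sum>p\<in>P. card P + card (carrier R) * card max_ideal)"
  proof (rule sum_mono)
    fix p assume "p \<in> P"
    moreover obtain x y where "p = (x, y)" by fastforce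
    ultimately have "x \<in> carrier R" "y \<in> carrier R" using P by auto
    from sum_card_parabola_inter_through_point_le[OF P this]
    show "(\<Sum>l\<in>{l \<in> carrier R \<times> carrier R. p \<in> parabola l}. ?n l)
        \<le> card P + card (carrier R) * card max_ideal"
      by (simp add: \<open>p = (x, y)\<close>)
  qed
  also have "\<dots> = card P ^ 2 + card P * (card (carrier R) * card max_ideal)"
    by (simp add: power2_eq_square algebra_simps)
  finally show ?thesis .
qed

lemma variance_card_parabola_inter_le:
  assumes P: "P \<subseteq> carrier R \<times> carrier R"
  shows "(\<Sum>l\<in>carrier R \<times> carrier R.
      (real (card (P \<inter> parabola l)) - real (card P) / real (card (carrier R)))\<^sup>2)
    \<le> real (card P) * (real (card (carrier R)) * real (card max_ideal))"
proof -
  let ?U = "carrier R \<times> carrier R" and ?n = "\<lambda>l. real (card (P \<inter> parabola l))"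
  define N where "N = real (card (carrier R))"
  define \<mu> where "\<mu> = real (card P) / N"
  have N_pos: "N > 0" unfolding N_def using finite_carrier by (auto simp: card_gt_0_iff)
  have first: "(\<Sum>l\<in>?U. ?n l) = \<mu> * N * N"
    using sum_card_parabola_inter[OF finite_carrier P] N_pos unfolding \<mu>_def N_def
    by (simp flip: of_nat_sum)
  have \<mu>N: "\<mu> * N = real (card P)" using N_pos by (simp add: \<mu>_def)
  have "(\<Sum>l\<in>?U. ?n l ^ 2) = real (\<Sum>l\<in>?U. card (P \<inter> parabola l) ^ 2)" by simp
  also have "\<dots> \<le> real (card P ^ 2 + card P * (card (carrier R) * card max_ideal))"
    using sum_square_card_parabola_inter_le[OF P] by (simp only: of_nat_le_iff)
  also have "\<dots> = (\<mu> * N)\<^sup>2 + \<mu> * N * (N * real (card max_ideal))"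
    unfolding \<mu>N by (simp add: N_def)
  finally have second: "(\<Sum>l\<in>?U. ?n l ^ 2) \<le> (\<mu> * N)\<^sup>2 + \<mu> * N * (N * real (card max_ideal))" .
  have "(\<Sum>l\<in>?U. (?n l - \<mu>)\<^sup>2) = (\<Sum>l\<in>?U. ?n l ^ 2) - 2 * \<mu> * (\<Sum>l\<in>?U. ?n l) + N * N * \<mu>\<^sup>2"
    by (simp add: power2_diff sum.distrib sum_subtractf sum_distrib_left N_def
        card_cartesian_product algebra_simps)
  also have "\<dots> = (\<Sum>l\<in>?U. ?n l ^ 2) - (\<mu> * N)\<^sup>2"
    unfolding first by (simp add: power2_eq_square algebra_simps)
  also have "\<dots> \<le> \<mu> * N * (N * real (card max_ideal))" using second by simp
  finally show ?thesis using N_pos by (simp add: \<mu>_def N_def)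
qed

lemma rich_parabolas_dichotomy:
  assumes P: "P \<subseteq> carrier R \<times> carrier R"
    and L: "L \<subseteq> carrier R \<times> carrier R" "L \<noteq> {}"
    and rich: "\<And>l. l \<in> L \<Longrightarrow> \<alpha> \<le> real (card (P \<inter> parabola l))" and "0 \<le> \<alpha>"
  shows "real (card (carrier R)) * \<alpha> \<le> 2 * real (card P)
    \<or> real (card L) * \<alpha>\<^sup>2 \<le> 4 * real (card P) * (real (card (carrier R)) * real (card max_ideal))"
proof -
  let ?U = "carrier R \<times> carrier R"
  define N where "N = real (card (carrier R))"
  define f where "f l = real (card (P \<inter> parabola l)) - real (card P) / N" for l
  define K where "K = real (card P) * (N * real (card max_ideal))"
  have N_pos: "N > 0" unfolding N_def using finite_carrier by (auto simp: card_gt_0_iff)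
  have L_pos: "real (card L) > 0"
    using L finite_carrier by (auto simp: card_gt_0_iff intro: finite_subset)
  show ?thesis
  proof (cases "N * \<alpha> \<le> 2 * real (card P)")
    case True
    thus ?thesis by (simp add: N_def)
  next
    case False
    hence "real (card P) / N \<le> \<alpha> / 2" using N_pos by (simp add: field_simps)
    hence "\<alpha> / 2 \<le> f l" if "l \<in> L" for l using rich[OF that] by (simp add: f_def)
    hence "(\<Sum>l\<in>L. \<alpha> / 2) \<le> (\<Sum>l\<in>L. f l)" by (rule sum_mono)
    hence "real (card L) * (\<alpha> / 2) \<le> (\<Sum>l\<in>L. f l)" by simp
    hence "(real (card L) * (\<alpha> / 2))\<^sup>2 \<le> (\<Sum>l\<in>L. f l)\<^sup>2"
      using \<open>0 \<le> \<alpha>\<close> by (intro power_mono) auto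
    also have "\<dots> \<le> (\<Sum>l\<in>L. (f l)\<^sup>2) * real (card L)"
      by (rule sum_squared_le_sum_of_squares)
    also have "\<dots> \<le> (\<Sum>l\<in>?U. (f l)\<^sup>2) * real (card L)"
      using L finite_carrier by (intro mult_right_mono sum_mono2) auto
    also have "\<dots> \<le> K * real (card L)"
      using variance_card_parabola_inter_le[OF P]
      by (intro mult_right_mono) (simp_all add: f_def N_def K_def)
    finally have "(real (card L) * (\<alpha> / 2))\<^sup>2 \<le> real (card L) * K"
      by (simp only: mult.commute[of K])
    moreover have "(real (card L) * (\<alpha> / 2))\<^sup>2 = real (card L) * (real (card L) * \<alpha>\<^sup>2 / 4)"
      by (simp add: power2_eq_square)
    ultimately have "real (card L) * (real (card L) * \<alpha>\<^sup>2 / 4) \<le> real (card L) * K"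
      by simp
    hence "real (card L) * \<alpha>\<^sup>2 / 4 \<le> K" using L_pos by (rule mult_left_le_imp_le)
    hence "real (card L) * \<alpha>\<^sup>2 \<le> 4 * real (card P) * (N * real (card max_ideal))"
      by (simp add: K_def)
    thus ?thesis by (simp add: N_def)
  qed
qed

lemma card_le_card_ring_sumsets_inter_vertex_parabola:
  assumes A: "A \<subseteq> carrier R" and a: "a \<in> A" and c: "c \<in> A"
  shows "card A \<le> card ((ring_sumset R A \<times> ring_sumset R (ring_squares R A))
    \<inter> parabola (vertex_parabola a (c \<otimes> c)))"
proof (rule card_inj_on_le)
  let ?f = "\<lambda>b. (a \<oplus> b, b \<otimes> b \<oplus> c \<otimes> c)"
  have ac: "a \<in> carrier R" "c \<in> carrier R" using a c A by auto
  show "inj_on ?f A"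
    using A ac by (intro inj_onI) (simp add: subset_iff)
  show "?f ` A \<subseteq> (ring_sumset R A \<times> ring_sumset R (ring_squares R A))
      \<inter> parabola (vertex_parabola a (c \<otimes> c))"
  proof clarify
    fix b assume b: "b \<in> A"
    hence bc: "b \<in> carrier R" using A by auto
    have "a \<oplus> b \<in> ring_sumset R A" using a b by (auto simp: ring_sumset_def)
    moreover have "b \<otimes> b \<oplus> c \<otimes> c \<in> ring_sumset R (ring_squares R A)"
      using b c by (auto simp: ring_sumset_def ring_squares_def)
    moreover have "b \<otimes> b \<oplus> c \<otimes> c = (a \<oplus> b \<ominus> a) \<otimes> (a \<oplus> b \<ominus> a) \<oplus> c \<otimes> c"
      using ac bc by algebra
    ultimately show "?f b \<in> (ring_sumset R A \<times> ring_sumset R (ring_squares R A))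
        \<inter> parabola (vertex_parabola a (c \<otimes> c))"
      using ac bc by (simp add: mem_parabola_vertex_parabola_iff)
  qed
  show "finite ((ring_sumset R A \<times> ring_sumset R (ring_squares R A))
      \<inter> parabola (vertex_parabola a (c \<otimes> c)))"
    using finite_parabola[OF finite_carrier] by simp
qed

lemma card_vertex_parabolas_of_squares_ge:
  assumes two: "\<one> \<oplus> \<one> \<in> Units R" and A: "A \<subseteq> carrier R"
    and large: "2 * card max_ideal \<le> card A"
  shows "card A * card A
    \<le> 4 * card ((\<lambda>(a, s). vertex_parabola a s) ` (A \<times> (\<lambda>c. c \<otimes> c) ` (A - max_ideal)))"
proof -
  let ?S = "(\<lambda>c. c \<otimes> c) ` (A - max_ideal)"
  have "inj_on (\<lambda>(a, s). vertex_parabola a s) (A \<times> ?S)"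
    by (rule inj_on_subset[OF inj_on_vertex_parabola[OF two]]) (use A in auto)
  hence card_L: "card ((\<lambda>(a, s). vertex_parabola a s) ` (A \<times> ?S)) = card A * card ?S"
    by (simp add: card_image card_cartesian_product)
  have "card A \<le> 2 * card (A - max_ideal)"
    using large diff_card_le_card_Diff[OF finite_max_ideal, of A]
      card_mono[OF finite_max_ideal, of "A \<inter> max_ideal"]
    by (simp add: Diff_Int2)
  moreover have "card (A - max_ideal) \<le> 2 * card ?S"
    by (rule card_le_twice_card_squares[OF two]) (use A Units_iff_notin_max_ideal in auto)
  ultimately have "card A * card A \<le> card A * (4 * card ?S)"
    by (intro mult_le_mono2) linarith
  thus ?thesis unfolding card_L by (simp only: mult.left_commute)
qed

lemma sumset_squares_incidence_dichotomy:
  assumes two: "\<one> \<oplus> \<one> \<in> Units R" and A: "A \<subseteq> carrier R"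
    and large: "2 * card max_ideal \<le> card A"
  shows "real (card (carrier R)) * real (card A)
      \<le> 2 * (real (card (ring_sumset R A)) * real (card (ring_sumset R (ring_squares R A))))
    \<or> real (card A) ^ 4
      \<le> 16 * (real (card (ring_sumset R A)) * real (card (ring_sumset R (ring_squares R A))))
         * (real (card (carrier R)) * real (card max_ideal))"
proof -
  let ?P = "ring_sumset R A \<times> ring_sumset R (ring_squares R A)"
  let ?L = "(\<lambda>(a, s). vertex_parabola a s) ` (A \<times> (\<lambda>c. c \<otimes> c) ` (A - max_ideal))"
  have P: "?P \<subseteq> carrier R \<times> carrier R"
    using A by (auto simp: ring_sumset_def ring_squares_def)
  have L: "?L \<subseteq> carrier R \<times> carrier R"
    using A by (auto simp: vertex_parabola_def)
  have L_large: "real (card A) * real (card A) \<le> 4 * real (card ?L)"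
    using card_vertex_parabolas_of_squares_ge[OF two A large] by (simp only: of_nat_le_iff flip: of_nat_mult)
  have A_pos: "0 < real (card A)" using large card_max_ideal_pos by simp
  have "?L \<noteq> {}"
  proof
    assume L_empty: "?L = {}"
    show False using L_large A_pos unfolding L_empty by (simp add: mult_le_0_iff)
  qed
  moreover have "real (card A) \<le> real (card (?P \<inter> parabola l))" if "l \<in> ?L" for l
    using that card_le_card_ring_sumsets_inter_vertex_parabola[OF A] by auto
  ultimately have dichotomy: "real (card (carrier R)) * real (card A) \<le> 2 * real (card ?P)
      \<or> real (card ?L) * (real (card A))\<^sup>2
        \<le> 4 * real (card ?P) * (real (card (carrier R)) * real (card max_ideal))"
    using rich_parabolas_dichotomy[OF P L] by simp
  have "real (card A) * real (card A) * (real (card A) * real (card A))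
      \<le> 4 * real (card ?L) * (real (card A) * real (card A))"
    using L_large by (rule mult_right_mono) simp
  hence "real (card A) ^ 4 \<le> 4 * (real (card ?L) * (real (card A))\<^sup>2)"
    by (simp add: power2_eq_square power4_eq_xxxx mult.assoc)
  with dichotomy show ?thesis by (auto simp: card_cartesian_product)
qed

end

section \<open>Real arithmetic\<close>

lemma cube_bound_from_dichotomy:
  fixes a x y Q K c :: real
  assumes a: "0 < a" "a \<le> x" and y: "0 \<le> y" and Q: "0 \<le> Q" and K: "0 < K"
    and energy: "c * (Q * K) \<le> x * a\<^sup>2"
    and dichotomy: "Q * a \<le> 2 * (x * y) \<or> a ^ 4 \<le> 16 * (x * y) * K"
  shows "min (1/2) (c/16) * Q * a\<^sup>2 \<le> x * x * y"
  using dichotomy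
proof
  assume "Q * a \<le> 2 * (x * y)"
  hence "Q * a * a \<le> 2 * (x * y) * x"
    using a y by (intro mult_mono[of "Q * a" "2 * (x * y)" a x]) auto
  hence "1/2 * Q * a\<^sup>2 \<le> x * x * y" by (simp add: power2_eq_square algebra_simps)
  moreover have "min (1/2) (c/16) * (Q * a\<^sup>2) \<le> 1/2 * (Q * a\<^sup>2)"
    using Q by (intro mult_right_mono) auto
  ultimately show ?thesis by (simp add: mult.assoc)
next
  assume h: "a ^ 4 \<le> 16 * (x * y) * K"
  have "c * (Q * K) * a\<^sup>2 \<le> x * a\<^sup>2 * a\<^sup>2"
    using energy by (rule mult_right_mono) simp
  also have "\<dots> = x * a ^ 4" by (simp add: power2_eq_square power4_eq_xxxx)
  also have "\<dots> \<le> x * (16 * (x * y) * K)" using h a by (intro mult_left_mono) auto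
  finally have "(c * Q * a\<^sup>2) * K \<le> (16 * (x * x * y)) * K" by (simp add: algebra_simps)
  hence "c / 16 * Q * a\<^sup>2 \<le> x * x * y" using K by simp
  moreover have "min (1/2) (c/16) * (Q * a\<^sup>2) \<le> c / 16 * (Q * a\<^sup>2)"
    using Q by (intro mult_right_mono) auto
  ultimately show ?thesis by (simp add: mult.assoc)
qed

lemma mult_mult_le_max_cube:
  fixes x y :: real
  assumes "0 \<le> x" "0 \<le> y"
  shows "x * x * y \<le> max x y ^ 3"
proof -
  have "x * x * y \<le> max x y * max x y * max x y"
    using assms by (intro mult_mono) auto
  thus ?thesis by (simp add: power3_eq_cube)
qed

lemma powr_one_third_cube:
  fixes M :: real
  assumes "0 \<le> M"
  shows "(M ^ 3) powr (1/3) = M"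
proof -
  have "(M ^ 3) powr (1/3) = (M powr 3) powr (1/3)" by (simp only: powr_numeral[OF assms])
  also have "\<dots> = M" using assms by (simp only: powr_powr) simp
  finally show ?thesis .
qed

lemma cube_root_bound:
  fixes D q a M :: real
  assumes D: "0 < D" and q: "0 < q" and a: "0 < a" and M: "0 \<le> M"
    and cube: "D * q ^ r * a\<^sup>2 \<le> M ^ 3"
  shows "D powr (1/3) * q powr (real r / 3) * a powr (2/3) \<le> M"
proof -
  have "(q ^ r) powr (1/3) = q powr (real r / 3)"
    using q by (simp only: powr_realpow[symmetric] powr_powr) simp
  moreover have "(a\<^sup>2) powr (1/3) = a powr (2/3)"
    using a by (simp only: powr_numeral[symmetric] powr_powr) simp
  ultimately have "D powr (1/3) * q powr (real r / 3) * a powr (2/3) = (D * q ^ r * a\<^sup>2) powr (1/3)"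
    by (simp only: powr_mult)
  also have "\<dots> \<le> (M ^ 3) powr (1/3)"
    using cube D q a by (intro powr_mono2) auto
  also have "\<dots> = M" using M by (rule powr_one_third_cube)
  finally show ?thesis .
qed

section \<open>Uniformizers\<close>

locale uniformized_local_ring = finite_local_ring +
  fixes z
  assumes uniformizer_closed: "z \<in> carrier R"
    and maximalideal_PIdl_uniformizer: "maximalideal (PIdl z) R"
begin

definition nilpotency_index :: nat where
  "nilpotency_index = (LEAST n. 0 < n \<and> z [^] n = \<zero>)"

lemma PIdl_uniformizer: "PIdl z = max_ideal"
  by (rule maximalideal_eq_max_ideal[OF maximalideal_PIdl_uniformizer])

lemma pow_uniformizer_in_max_ideal:
  fixes n :: nat
  assumes "0 < n"
  shows "z [^] n \<in> max_ideal"
proof -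
  have "z [^] n = z [^] (n - 1) \<otimes> z"
    using assms by (simp flip: nat_pow_Suc)
  moreover have "z [^] (n - 1) \<otimes> z \<in> PIdl z"
    unfolding cgenideal_def using uniformizer_closed by blast
  ultimately show ?thesis by (simp only: PIdl_uniformizer)
qed

lemma uniformizer_nilpotent: "\<exists>n::nat>0. z [^] n = \<zero>"
proof -
  have "\<not> inj_on (\<lambda>n. z [^] n) {..card (carrier R)}"
  proof
    assume "inj_on (\<lambda>n. z [^] n) {..card (carrier R)}"
    hence "card {..card (carrier R)} \<le> card (carrier R)"
      using uniformizer_closed by (intro card_inj_on_le finite_carrier) auto
    thus False by simp
  qed
  then obtain a b :: nat where "a \<noteq> b" and "z [^] a = z [^] b"
    unfolding inj_on_def by blast
  then obtain i j :: nat where "i < j" and pow_eq: "z [^] i = z [^] j"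
    by (metis linorder_neqE_nat)
  define t where "t = z [^] (j - i)"
  have t: "t \<in> carrier R" "t \<in> max_ideal"
    using \<open>i < j\<close> uniformizer_closed pow_uniformizer_in_max_ideal by (simp_all add: t_def)
  have zi: "z [^] i \<in> carrier R" using uniformizer_closed by simp
  have "z [^] j = z [^] i \<otimes> t"
    using \<open>i < j\<close> uniformizer_closed by (simp add: t_def nat_pow_mult)
  hence "z [^] i = z [^] i \<otimes> t" by (simp only: pow_eq)
  hence "(\<one> \<oplus> \<ominus> t) \<otimes> z [^] i = \<zero>"
    using zi t by algebra
  moreover have "\<one> \<oplus> \<ominus> t \<in> Units R"
    using Units_add_max_ideal[OF Units_one_closed max_ideal.a_inv_closed[OF t(2)]] .
  ultimately have "z [^] i = \<zero>"
    using zi by (simp add: Units_mult_eq_zero_iff)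
  hence "z [^] Suc i = \<zero>" using uniformizer_closed by simp
  thus ?thesis using zero_less_Suc by blast
qed

lemma nilpotency_index_pos: "0 < nilpotency_index"
  and pow_nilpotency_index: "z [^] nilpotency_index = \<zero>"
  using LeastI_ex[OF uniformizer_nilpotent] by (simp_all add: nilpotency_index_def)

lemma pow_ne_zero_if_less_nilpotency_index:
  assumes "i < nilpotency_index"
  shows "z [^] i \<noteq> \<zero>"
proof (cases i)
  case 0
  thus ?thesis using max_ideal.I_notcarr max_ideal.one_imp_carrier by auto
next
  case (Suc k)
  thus ?thesis using not_less_Least[OF assms[unfolded nilpotency_index_def]] by simp
qed

lemma annihilator_pow_subset_max_ideal:
  assumes "i < nilpotency_index"
  shows "annihilator (z [^] i) \<subseteq> max_ideal"
proof
  fix x assume x: "x \<in> annihilator (z [^] i)"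
  hence xc: "x \<in> carrier R" and "x \<otimes> z [^] i = \<zero>" by (simp_all add: annihilator_def)
  show "x \<in> max_ideal"
  proof (rule ccontr)
    assume "x \<notin> max_ideal"
    hence "x \<in> Units R" using Units_iff_notin_max_ideal[OF xc] by simp
    hence "z [^] i = \<zero>"
      using \<open>x \<otimes> z [^] i = \<zero>\<close> uniformizer_closed by (simp add: Units_mult_eq_zero_iff)
    thus False using pow_ne_zero_if_less_nilpotency_index[OF assms] by contradiction
  qed
qed

lemma card_PIdl_pow_uniformizer:
  assumes "i < nilpotency_index"
  shows "card (PIdl (z [^] i)) = residue_card * card (PIdl (z [^] Suc i))"
proof -
  let ?w = "z [^] i"
  have w: "?w \<in> carrier R" using uniformizer_closed by simp
  have PIdl_eq_image: "PIdl a = (\<lambda>x. x \<otimes> a) ` carrier R" for a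
    by (auto simp: cgenideal_def)
  have "(\<lambda>x. x \<otimes> ?w) ` max_ideal = PIdl (z [^] Suc i)"
  proof -
    have "x \<otimes> z \<otimes> ?w = x \<otimes> z [^] Suc i" if "x \<in> carrier R" for x
      using that uniformizer_closed by (simp add: m_assoc m_comm[of z])
    hence "(\<lambda>x. x \<otimes> ?w) ` (\<lambda>x. x \<otimes> z) ` carrier R = (\<lambda>x. x \<otimes> z [^] Suc i) ` carrier R"
      unfolding image_image by (rule image_cong[OF refl])
    thus ?thesis by (simp only: PIdl_eq_image PIdl_uniformizer[symmetric])
  qed
  moreover have "card max_ideal = card ((\<lambda>x. x \<otimes> ?w) ` max_ideal) * card (annihilator ?w)"
  proof (rule card_eq_card_image_mult_card_annihilator[OF finite_carrier w])
    show "max_ideal \<subseteq> carrier R" by (rule max_ideal.a_subset)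
    fix a x assume "a \<in> max_ideal" and "x \<in> annihilator ?w"
    thus "a \<oplus> x \<in> max_ideal"
      using annihilator_pow_subset_max_ideal[OF assms] max_ideal.a_closed by blast
  qed
  moreover have "card (carrier R) = card (PIdl ?w) * card (annihilator ?w)"
    unfolding PIdl_eq_image
    by (rule card_eq_card_image_mult_card_annihilator[OF finite_carrier w])
      (auto simp: annihilator_def)
  moreover have "card (annihilator ?w) > 0"
    using finite_carrier w by (auto simp: card_gt_0_iff annihilator_def)
  ultimately have "card (PIdl ?w) * card (annihilator ?w)
      = residue_card * card (PIdl (z [^] Suc i)) * card (annihilator ?w)"
    using residue_card_mult_card_max_ideal by (simp add: mult.assoc)
  thus ?thesis using \<open>card (annihilator ?w) > 0\<close> by simp
qed

lemma card_carrier_eq: "card (carrier R) = residue_card ^ nilpotency_index"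
proof -
  have "card (PIdl (z [^] (nilpotency_index - j))) = residue_card ^ j"
    if "j \<le> nilpotency_index" for j
    using that
  proof (induction j)
    case 0
    have "PIdl \<zero> = {\<zero>}" unfolding cgenideal_def using zero_closed by force
    thus ?case using pow_nilpotency_index by simp
  next
    case (Suc j)
    hence "nilpotency_index - Suc j < nilpotency_index"
      and index: "Suc (nilpotency_index - Suc j) = nilpotency_index - j" by auto
    hence "card (PIdl (z [^] (nilpotency_index - Suc j)))
        = residue_card * card (PIdl (z [^] (nilpotency_index - j)))"
      by (simp only: card_PIdl_pow_uniformizer flip: index)
    thus ?case using Suc by simp
  qed
  moreover have "PIdl \<one> = carrier R" by (force simp: cgenideal_def)
  ultimately show ?thesis by (metis diff_self_eq_0 le_refl nat_pow_0)
qed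

lemma residue_card_pos: "0 < residue_card"
proof -
  have "0 < card (carrier R)" using finite_carrier by (auto simp: card_gt_0_iff)
  thus ?thesis using residue_card_mult_card_max_ideal by (metis gr0I mult_zero_left less_irrefl)
qed

lemma card_max_ideal_eq: "card max_ideal = residue_card ^ (nilpotency_index - 1)"
proof -
  have "residue_card * card max_ideal = residue_card * residue_card ^ (nilpotency_index - 1)"
    using residue_card_mult_card_max_ideal card_carrier_eq nilpotency_index_pos
    by (simp flip: power_Suc)
  thus ?thesis using residue_card_pos by simp
qed

lemma max_card_sumsets_cube_ge:
  assumes odd: "odd residue_card" and A: "A \<subseteq> carrier R"
    and large: "2 * card max_ideal \<le> card A"
    and energy: "c * real residue_card ^ (3 * nilpotency_index - 1)
      \<le> real (card (ring_sumset R A)) * real (card A) ^ 2"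
  shows "min (1/2) (c/16) * real residue_card ^ nilpotency_index * real (card A) ^ 2
    \<le> real (max (card (ring_sumset R A)) (card (ring_sumset R (ring_squares R A)))) ^ 3"
proof -
  define a where "a = real (card A)"
  define x where "x = real (card (ring_sumset R A))"
  define y where "y = real (card (ring_sumset R (ring_squares R A)))"
  define q where "q = real residue_card"
  define r where "r = nilpotency_index"
  have q: "0 < q" using residue_card_pos by (simp add: q_def)
  have "0 < r" using nilpotency_index_pos by (simp add: r_def)
  hence "3 * r - 1 = r + (r + (r - 1))" by simp
  hence "q ^ (3 * r - 1) = q ^ r * (q ^ r * q ^ (r - 1))" by (simp only: power_add)
  hence energy': "c * (q ^ r * (q ^ r * q ^ (r - 1))) \<le> x * a\<^sup>2"
    using energy by (simp add: a_def x_def q_def r_def)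
  have "real (card (carrier R)) = q ^ r" and "real (card max_ideal) = q ^ (r - 1)"
    by (simp_all add: card_carrier_eq card_max_ideal_eq q_def r_def)
  with sumset_squares_incidence_dichotomy[OF one_add_one_Units_if_odd_residue_card[OF odd] A large]
  have dichotomy: "q ^ r * a \<le> 2 * (x * y) \<or> a ^ 4 \<le> 16 * (x * y) * (q ^ r * q ^ (r - 1))"
    by (simp add: a_def x_def y_def)
  have a: "0 < a" using large card_max_ideal_pos by (simp add: a_def)
  have "a \<le> x" using card_le_card_ring_sumset[OF finite_carrier A] by (simp add: a_def x_def)
  have "0 \<le> y" "0 \<le> q ^ r" "0 < q ^ r * q ^ (r - 1)" using q by (simp_all add: y_def)
  from cube_bound_from_dichotomy[OF a \<open>a \<le> x\<close> this energy' dichotomy]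
  have "min (1/2) (c/16) * q ^ r * a\<^sup>2 \<le> x * x * y" .
  also have "\<dots> \<le> max x y ^ 3" by (rule mult_mult_le_max_cube) (simp_all add: x_def y_def)
  finally show ?thesis by (simp add: a_def x_def y_def q_def r_def of_nat_max)
qed

lemma sumset_squares_growth:
  assumes odd: "odd residue_card" and A: "A \<subseteq> carrier R" and c: "0 < c"
    and large: "2 * real residue_card ^ (nilpotency_index - 1) \<le> real (card A)"
    and energy: "c * real residue_card ^ (3 * nilpotency_index - 1)
      \<le> real (card (ring_sumset R A)) * real (card A) ^ 2"
  shows "min (1/2) (c/16) powr (1/3) * real residue_card powr (real nilpotency_index / 3)
      * real (card A) powr (2/3)
    \<le> real (max (card (ring_sumset R A)) (card (ring_sumset R (ring_squares R A))))"
proof (rule cube_root_bound)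
  have "real (2 * card max_ideal) \<le> real (card A)" using large by (simp add: card_max_ideal_eq)
  hence "2 * card max_ideal \<le> card A" by (simp only: of_nat_le_iff)
  from max_card_sumsets_cube_ge[OF odd A this energy]
  show "min (1/2) (c/16) * real residue_card ^ nilpotency_index * (real (card A))\<^sup>2
    \<le> real (max (card (ring_sumset R A)) (card (ring_sumset R (ring_squares R A)))) ^ 3" .
  have "0 < real residue_card ^ (nilpotency_index - 1)" using residue_card_pos by simp
  thus "0 < real (card A)" using large by linarith
qed (use c residue_card_pos in auto)

end

lemma uniformized_local_ring_if_finite_valuation_ring:
  assumes "finite_valuation_ring R" and "z \<in> carrier R" and "maximalideal (PIdl\<^bsub>R\<^esub> z) R"
  shows "uniformized_local_ring R z"
  using assms unfolding finite_valuation_ring_def uniformized_local_ring_def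
    uniformized_local_ring_axioms_def finite_local_ring_def finite_local_ring_axioms_def
  by auto

theorem theorem1p5:
  "\<forall>c::real. c > 0 \<longrightarrow>
     (\<exists>C::real. C > 0 \<and>
       (\<forall>(R::'a ring) z q r p k.
          finite_valuation_ring R \<longrightarrow>
          z \<in> carrier R \<longrightarrow> maximalideal (PIdl\<^bsub>R\<^esub> z) R \<longrightarrow>
          q = card (carrier (R Quot (PIdl\<^bsub>R\<^esub> z))) \<longrightarrow>
          r = (LEAST n::nat. n > 0 \<and> z [^]\<^bsub>R\<^esub> n = \<zero>\<^bsub>R\<^esub>) \<longrightarrow>
          Factorial_Ring.prime (p::nat) \<longrightarrow> odd p \<longrightarrow> k > 0 \<longrightarrow> q = p ^ k \<longrightarrow>
          (\<forall>A. A \<subseteq> carrier R \<longrightarrow>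
             real (card A) \<ge> 2 * real q ^ (r - 1) \<longrightarrow>
             real (card (ring_sumset R A)) * real (card A) ^ 2 \<ge> c * real q ^ (3 * r - 1) \<longrightarrow>
             real (max (card (ring_sumset R A)) (card (ring_sumset R (ring_squares R A))))
               \<ge> C * real q powr (real r / 3) * real (card A) powr (2 / 3))))"
  apply (intro allI impI)
  subgoal for c
    apply (intro exI[of _ "min (1/2) (c/16) powr (1/3)"] conjI allI impI)
     apply simp
    subgoal premises prems for R z q r p k A
    proof -
      interpret uniformized_local_ring R z
        using prems(2-4) by (rule uniformized_local_ring_if_finite_valuation_ring)
      have "q = residue_card" and "r = nilpotency_index"
        using prems by (simp_all add: residue_card_def PIdl_uniformizer nilpotency_index_def)
      moreover have "odd q" using prems(8,10) by simp
      ultimately show ?thesis using sumset_squares_growth prems by simp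
    qed
    done
  done

end
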